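(* Let $\alpha=\{a_1,\dots,a_{2k}\}\subset\{1,\dots,\ell\}$ with $|\alpha|=2k\ge4$. For all positive integers $m_1,\dots,m_{2k}$, in $A(\mathcal{H}^+)$ we have $[h_{a_1}(-m_1)\cdots h_{a_{2k}}(-m_{2k})\mathbf{1}]=(-1)^{m_1+\cdots+m_{2k}}[S_\alpha]$.
   Context: $\mathfrak{h}$ is an $\ell$-dimensional complex space with orthonormal basis $h_1,\dots,h_\ell$; $\mathcal{H}=M(1,0)$ the free bosonic vertex operator algebra generated by Heisenberg modes $h(n)$ on vacuum $\mathbf{1}$; $\mathcal{H}^+$ the fixed points of the automorphism induced by $h\mapsto-h$. Zhu's algebra $A(\mathcal{H}^+)=\mathcal{H}^+/O(\mathcal{H}^+)$ with product induced by $u*v=\sum_{i\ge0}\binom{\mathrm{wt}\,u}{i}u_{i-1}v$, $O$ spanned by $u\circ v=\sum_{i\ge0}\binom{\mathrm{wt}\,u}{i}u_{i-2}v$; $[u]$ the class of $u$. For distinct $a,b$, $S_{ab}=h_a(-1)h_b(-1)\mathbf{1}$; writing $\alpha$ as a disjoint union of two-element sets $\alpha_1\cup\cdots\cup\alpha_k$, $S_\alpha=S_{\alpha_1}*\cdots*S_{\alpha_k}$ (with $S_{\{a,b\}}=S_{ab}$). *)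

theory Defs
  imports Complex_Main "HOL-Library.Multiset" "HOL-Library.Product_Lexorder"
    "HOL-Library.Function_Algebras"
begin

text \<open>Fock space model of M(1,0): a basis monomial
  h_{a_1}(-n_1)...h_{a_r}(-n_r)1 (n_i >= 1) is the multiset of pairs (a_i,n_i);
  a vector is a (finitely supported) coefficient function.\<close>

type_synonym mono = "(nat \<times> nat) multiset"
type_synonym vec = "mono \<Rightarrow> complex"

definition supp :: "vec \<Rightarrow> mono set" where
  "supp v = {M. v M \<noteq> 0}"

definition bvec :: "mono \<Rightarrow> vec" where
  "bvec M = (\<lambda>N. if N = M then 1 else 0)"

definition vac :: vec where "vac = bvec {#}"

definition smul :: "complex \<Rightarrow> vec \<Rightarrow> vec" where
  "smul c v = (\<lambda>N. c * v N)"

text \<open>Heisenberg mode h_a(n) on M(1,0), with [h_a(m),h_b(n)] = m delta_ab delta_{m+n,0}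
  and h_a(0) = 0 on M(1,0).\<close>
definition hop :: "nat \<Rightarrow> int \<Rightarrow> vec \<Rightarrow> vec" where
  "hop a n v =
    (if n < 0 then (\<lambda>N. if (a, nat (-n)) \<in># N then v (N - {#(a, nat (-n))#}) else 0)
     else if n > 0 then (\<lambda>N. of_int n * of_nat (count (N + {#(a, nat n)#}) (a, nat n))
                               * v (N + {#(a, nat n)#}))
     else 0)"

definition wt :: "mono \<Rightarrow> nat" where
  "wt M = sum_mset (image_mset snd M)"

text \<open>Modes u_q v of basis vectors, via the iterate (Borcherds) formula
  (h(-n)w)_q = sum_j binom(-n,j) (-1)^j (h(-n-j) w_{q+j} - (-1)^n w_{-n+q-j} h(j)),
  with 1_q = delta_{q,-1}.  The sum over j is finite; only terms with
  j <= wt w + wt v + |q| can be nonzero, so we truncate there.\<close>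
function modeB :: "mono \<Rightarrow> int \<Rightarrow> mono \<Rightarrow> vec" where
  "modeB M q N =
    (if M = {#} then (if q = -1 then bvec N else 0)
     else (let x = Max (set_mset M); a = fst x; n = snd x; W = M - {#x#} in
       (\<Sum>j\<in>{0..wt W + wt N + nat \<bar>q\<bar>}.
          smul ((of_int (- int n) gchoose j) * (-1) ^ j)
            (hop a (- int n - int j) (modeB W (q + int j) N)
             - smul ((-1) ^ n)
                 (if j = 0 then 0
                  else smul (of_nat j * of_nat (count N (a, j)))
                         (modeB W (- int n + q - int j) (N - {#(a, j)#})))))))"
  by auto
termination
  by (relation "measure (\<lambda>(M, q, N). size M)")
     (auto simp: size_Diff1_less)

definition mode :: "vec \<Rightarrow> int \<Rightarrow> vec \<Rightarrow> vec" where
  "mode u q v = (\<Sum>M\<in>supp u. \<Sum>N\<in>supp v. smul (u M * v N) (modeB M q N))"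

text \<open>Zhu's product and circle product, for homogeneous u (wt u = wt M), extended bilinearly.\<close>
definition zstarB :: "mono \<Rightarrow> mono \<Rightarrow> vec" where
  "zstarB M N = (\<Sum>i\<in>{0..wt M}. smul (of_nat (wt M choose i)) (modeB M (int i - 1) N))"

definition zcircB :: "mono \<Rightarrow> mono \<Rightarrow> vec" where
  "zcircB M N = (\<Sum>i\<in>{0..wt M}. smul (of_nat (wt M choose i)) (modeB M (int i - 2) N))"

definition zstar :: "vec \<Rightarrow> vec \<Rightarrow> vec" where
  "zstar u v = (\<Sum>M\<in>supp u. \<Sum>N\<in>supp v. smul (u M * v N) (zstarB M N))"

definition zcirc :: "vec \<Rightarrow> vec \<Rightarrow> vec" where
  "zcirc u v = (\<Sum>M\<in>supp u. \<Sum>N\<in>supp v. smul (u M * v N) (zcircB M N))"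

definition fock :: "nat \<Rightarrow> vec set" where
  "fock l = {v. finite (supp v) \<and>
     (\<forall>M\<in>supp v. \<forall>x\<in>#M. 1 \<le> fst x \<and> fst x \<le> l \<and> 1 \<le> snd x)}"

text \<open>theta acts by (-1)^(length) on monomials.\<close>
definition Hplus :: "nat \<Rightarrow> vec set" where
  "Hplus l = {v \<in> fock l. \<forall>M. odd (size M) \<longrightarrow> v M = 0}"

inductive_set Ospace :: "nat \<Rightarrow> vec set" for l where
  zero: "0 \<in> Ospace l"
| circ: "u \<in> Hplus l \<Longrightarrow> v \<in> Hplus l \<Longrightarrow> zcirc u v \<in> Ospace l"
| add: "x \<in> Ospace l \<Longrightarrow> y \<in> Ospace l \<Longrightarrow> x + y \<in> Ospace l"
| scale: "x \<in> Ospace l \<Longrightarrow> smul c x \<in> Ospace l"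

definition zhu_eq :: "nat \<Rightarrow> vec \<Rightarrow> vec \<Rightarrow> bool" where
  "zhu_eq l x y \<longleftrightarrow> x - y \<in> Ospace l"

definition Sab :: "nat \<Rightarrow> nat \<Rightarrow> vec" where
  "Sab a b = hop a (-1) (hop b (-1) vac)"

definition Salpha :: "(nat \<times> nat) list \<Rightarrow> vec" where
  "Salpha P = foldl (\<lambda>acc p. zstar acc (Sab (fst p) (snd p)))
                (Sab (fst (hd P)) (snd (hd P))) (tl P)"

definition hmono :: "(nat \<Rightarrow> nat) \<Rightarrow> (nat \<Rightarrow> nat) \<Rightarrow> nat \<Rightarrow> vec" where
  "hmono a m r = foldr (\<lambda>i v. hop (a i) (- int (m i)) v) [0..<r] vac"

end

theory Submission
  imports Defs
begin

text \<open>For Fock monomials u, v with disjoint colours (the indices a of the h_a), the modes u_q v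
  vanish for q \<ge> 0, u_{-1} v = u v and u_{-2} v = (L(-1) u) v.  So S_\<alpha> is the monomial
  h_{a_1}(-1)...h_{a_{2k}}(-1)1, and for u = h_x h_y and even v, u \<circ> v \<in> O(H^+) is a linear relation
  among u v and the two monomials obtained from it by raising the mode of x or of y.  With three
  distinct colours x, y, z, available because 2k \<ge> 4, the three such relations combine to show that
  raising a single mode by one changes the class only by a sign; induction on the weight then
  lowers every mode to -1.\<close>

declare modeB.simps[simp del]

lemma smul_zero_right[simp]: "smul c 0 = 0"
  by (simp add: smul_def zero_fun_def)

lemma smul_zero_left[simp]: "smul 0 v = 0"
  by (simp add: smul_def zero_fun_def)

lemma smul_one[simp]: "smul 1 v = v"
  by (simp add: smul_def)

lemma smul_smul[simp]: "smul c (smul d v) = smul (c * d) v"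
  by (simp add: smul_def mult.assoc)

lemma smul_diff_right: "smul c (u - v) = smul c u - smul c v"
  by (simp add: smul_def fun_eq_iff right_diff_distrib)

lemma hop_zero[simp]: "hop a n 0 = 0"
  by (simp add: hop_def zero_fun_def fun_eq_iff)

lemma hop_add: "hop a n (u + v) = hop a n u + hop a n v"
  by (auto simp: hop_def fun_eq_iff algebra_simps)

lemma hop_smul: "hop a n (smul c v) = smul c (hop a n v)"
  by (auto simp: hop_def fun_eq_iff smul_def algebra_simps)

lemma hop_sum_mset: "hop a n (\<Sum>x\<in>#M. f x) = (\<Sum>x\<in>#M. hop a n (f x))"
  by (induction M) (simp_all only: image_mset_add_mset sum_mset.add_mset hop_add
      image_mset_empty sum_mset.empty hop_zero)

lemma hop_creation_bvec: "1 \<le> n \<Longrightarrow> hop a (- int n) (bvec N) = bvec (add_mset (a, n) N)"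
  by (auto simp: hop_def bvec_def fun_eq_iff)

lemma supp_bvec[simp]: "supp (bvec M) = {M}"
  by (auto simp: supp_def bvec_def)

lemma wt_empty[simp]: "wt {#} = 0"
  by (simp add: wt_def)

lemma wt_add_mset[simp]: "wt (add_mset x M) = snd x + wt M"
  by (simp add: wt_def)

lemma sum_eq_single_nonzero:
  assumes "finite A" "i \<in> A" "\<And>j. j \<in> A \<Longrightarrow> j \<noteq> i \<Longrightarrow> f j = 0"
  shows "sum f A = f i"
  using assms by (subst sum.mono_neutral_right[of A "{i}"]) auto

lemma sum_eq_two_nonzero:
  assumes "finite A" "i \<in> A" "i' \<in> A" "i \<noteq> i'" "\<And>j. j \<in> A \<Longrightarrow> j \<noteq> i \<Longrightarrow> j \<noteq> i' \<Longrightarrow> f j = 0"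
  shows "sum f A = f i + f i'"
  using assms by (subst sum.mono_neutral_right[of A "{i, i'}"]) auto

lemma modeB_add_mset_max:
  assumes "\<forall>y\<in>#W. y \<le> x" "\<forall>y\<in>#N. fst y \<noteq> fst x"
  shows "modeB (add_mset x W) q N =
    (\<Sum>j\<in>{0..wt W + wt N + nat \<bar>q\<bar>}.
       smul ((of_int (- int (snd x)) gchoose j) * (-1) ^ j)
         (hop (fst x) (- int (snd x) - int j) (modeB W (q + int j) N)))"
proof -
  have "Max (set_mset (add_mset x W)) = x"
    using assms(1) by (intro Max_eqI) auto
  moreover have no_annihilation: "count N (fst x, j) = 0" for j
    using assms(2) by (metis count_inI fst_conv)
  ultimately show ?thesis
    by (subst modeB.simps) (auto simp: Let_def no_annihilation intro!: sum.cong)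
qed

definition raise :: "nat \<times> nat \<Rightarrow> nat \<times> nat" where
  "raise x = (fst x, Suc (snd x))"

text \<open>The product (L(-1) M) N of basis monomials with disjoint colours: L(-1) is the derivation
  sending h_a(-n) to n h_a(-n-1).\<close>
definition Lminus1_mul :: "mono \<Rightarrow> mono \<Rightarrow> vec" where
  "Lminus1_mul M N = (\<Sum>x\<in>#M. smul (of_nat (snd x)) (bvec (add_mset (raise x) (M - {#x#}) + N)))"

lemma modeB_disjoint_nonneg:
  assumes "\<forall>x\<in>#M. \<forall>y\<in>#N. fst x \<noteq> fst y" "0 \<le> q"
  shows "modeB M q N = 0"
  using assms
proof (induction M arbitrary: q rule: multiset_induct_max)
  case empty
  then show ?case by (simp add: modeB.simps[of "{#}"])
next
  case (add x W)
  have disj: "\<forall>y\<in>#N. fst y \<noteq> fst x" "\<forall>x\<in>#W. \<forall>y\<in>#N. fst x \<noteq> fst y"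
    using add.prems by auto
  then have "modeB W (q + int j) N = 0" for j
    using add.prems by (intro add.IH) auto
  then show ?case
    using add.hyps disj by (simp add: modeB_add_mset_max)
qed

lemma modeB_disjoint_minus1:
  assumes "\<forall>x\<in>#M. \<forall>y\<in>#N. fst x \<noteq> fst y" "\<forall>x\<in>#M. 1 \<le> snd x"
  shows "modeB M (-1) N = bvec (M + N)"
  using assms
proof (induction M rule: multiset_induct_max)
  case empty
  then show ?case by (simp add: modeB.simps[of "{#}"])
next
  case (add x W)
  have disj: "\<forall>y\<in>#N. fst y \<noteq> fst x" "\<forall>x\<in>#W. \<forall>y\<in>#N. fst x \<noteq> fst y"
    using add.prems by auto
  have "modeB W (-1 + int j) N = 0" if "j \<noteq> 0" for j
    using disj that by (intro modeB_disjoint_nonneg) auto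
  then have "modeB (add_mset x W) (-1) N = hop (fst x) (- int (snd x)) (modeB W (-1) N)"
    using add.hyps disj
    by (subst modeB_add_mset_max, simp, simp, subst sum_eq_single_nonzero[where i = 0]) auto
  then show ?case
    using add disj by (simp add: hop_creation_bvec)
qed

lemma modeB_disjoint_minus2:
  assumes "\<forall>x\<in>#M. \<forall>y\<in>#N. fst x \<noteq> fst y" "\<forall>x\<in>#M. 1 \<le> snd x"
  shows "modeB M (-2) N = Lminus1_mul M N"
  using assms
proof (induction M rule: multiset_induct_max)
  case empty
  then show ?case by (simp add: modeB.simps[of "{#}"] Lminus1_mul_def)
next
  case (add x W)
  obtain a n where x: "x = (a, n)" by fastforce
  have n: "1 \<le> n" using add.prems x by auto
  have disj: "\<forall>x\<in>#W. \<forall>y\<in>#N. fst x \<noteq> fst y" "\<forall>y\<in>#N. fst y \<noteq> a"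
    using add.prems x by auto
  have "modeB W (-2 + int j) N = 0" if "j \<noteq> 0" "j \<noteq> 1" for j
    using disj that by (intro modeB_disjoint_nonneg) auto
  moreover have "modeB W (-2) N = Lminus1_mul W N" "modeB W (-1) N = bvec (W + N)"
    using add disj by (simp_all add: modeB_disjoint_minus1)
  ultimately have "modeB (add_mset x W) (-2) N =
      hop a (- int n) (Lminus1_mul W N) + smul (of_nat n) (hop a (- int n - 1) (bvec (W + N)))"
    using add.hyps disj x
    by (subst modeB_add_mset_max, simp, simp, subst sum_eq_two_nonzero[where i = 0 and i' = 1]) auto
  also have "hop a (- int n - 1) (bvec (W + N)) = bvec (add_mset (raise x) (W + N))"
  proof -
    have "- int n - 1 = - int (Suc n)" by simp
    then show ?thesis
      by (simp only: x raise_def fst_conv snd_conv) (rule hop_creation_bvec; simp)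
  qed
  also have "hop a (- int n) (Lminus1_mul W N) =
      (\<Sum>y\<in>#W. smul (of_nat (snd y)) (bvec (add_mset (raise y) (add_mset x W - {#y#}) + N)))"
    unfolding Lminus1_mul_def hop_sum_mset hop_smul
    by (rule arg_cong[where f = sum_mset], rule image_mset_cong)
      (use n in \<open>simp add: hop_creation_bvec x add_mset_commute\<close>)
  finally show ?case
    by (simp add: Lminus1_mul_def x add.commute)
qed

lemma zstar_bvec_disjoint:
  assumes "\<forall>x\<in>#M. \<forall>y\<in>#N. fst x \<noteq> fst y" "\<forall>x\<in>#M. 1 \<le> snd x"
  shows "zstar (bvec M) (bvec N) = bvec (M + N)"
proof -
  have "zstar (bvec M) (bvec N) = zstarB M N"
    unfolding zstar_def supp_bvec by (simp add: bvec_def)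
  also have "\<dots> = modeB M (-1) N"
    unfolding zstarB_def
    using assms by (subst sum_eq_single_nonzero[where i = 0]) (auto simp: modeB_disjoint_nonneg)
  finally show ?thesis
    using assms by (simp add: modeB_disjoint_minus1)
qed

lemma zcirc_bvec_disjoint:
  assumes "\<forall>x\<in>#M. \<forall>y\<in>#N. fst x \<noteq> fst y" "\<forall>x\<in>#M. 1 \<le> snd x" "1 \<le> wt M"
  shows "zcirc (bvec M) (bvec N) = Lminus1_mul M N + smul (of_nat (wt M)) (bvec (M + N))"
proof -
  have "zcirc (bvec M) (bvec N) = zcircB M N"
    unfolding zcirc_def supp_bvec by (simp add: bvec_def)
  also have "\<dots> = modeB M (-2) N + smul (of_nat (wt M)) (modeB M (-1) N)"
    unfolding zcircB_def
    using assms by (subst sum_eq_two_nonzero[where i = 0 and i' = 1]) (auto simp: modeB_disjoint_nonneg)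
  finally show ?thesis
    using assms by (simp add: modeB_disjoint_minus1 modeB_disjoint_minus2)
qed

lemma Ospace_diff:
  assumes "x \<in> Ospace l" "y \<in> Ospace l"
  shows "x - y \<in> Ospace l"
proof -
  have "x - y = x + smul (-1) y"
    by (simp add: smul_def fun_eq_iff)
  then show ?thesis
    using assms by (metis Ospace.add Ospace.scale)
qed

lemma zhu_eq_refl: "zhu_eq l x x"
  by (simp add: zhu_eq_def Ospace.zero)

lemma zhu_eq_trans: "zhu_eq l x y \<Longrightarrow> zhu_eq l y z \<Longrightarrow> zhu_eq l x z"
  unfolding zhu_eq_def using Ospace.add by fastforce

lemma zhu_eq_smul: "zhu_eq l x y \<Longrightarrow> zhu_eq l (smul c x) (smul c y)"
  unfolding zhu_eq_def smul_diff_right[symmetric] by (rule Ospace.scale)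

definition fock_mono :: "nat \<Rightarrow> mono \<Rightarrow> bool" where
  "fock_mono l M \<longleftrightarrow> (\<forall>x\<in>#M. 1 \<le> fst x \<and> fst x \<le> l \<and> 1 \<le> snd x)"

lemma bvec_in_Hplus: "fock_mono l M \<Longrightarrow> even (size M) \<Longrightarrow> bvec M \<in> Hplus l"
  by (simp add: Hplus_def fock_def fock_mono_def) (simp add: bvec_def)

lemma zcirc_pair_relation:
  assumes "fock_mono l (add_mset x (add_mset y N))" "even (size N)"
    "\<forall>w\<in>#N. fst w \<noteq> fst x \<and> fst w \<noteq> fst y"
  shows "smul (of_nat (snd x)) (bvec (add_mset (raise x) (add_mset y N)))
       + smul (of_nat (snd y)) (bvec (add_mset x (add_mset (raise y) N)))
       + smul (of_nat (snd x + snd y)) (bvec (add_mset x (add_mset y N))) \<in> Ospace l"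
proof -
  have "zcirc (bvec {#x, y#}) (bvec N) \<in> Ospace l"
    using assms(1,2) by (intro Ospace.circ bvec_in_Hplus) (auto simp: fock_mono_def)
  moreover have "zcirc (bvec {#x, y#}) (bvec N) =
      Lminus1_mul {#x, y#} N + smul (of_nat (wt {#x, y#})) (bvec ({#x, y#} + N))"
    using assms by (intro zcirc_bvec_disjoint) (auto simp: fock_mono_def)
  ultimately show ?thesis
    by (simp add: Lminus1_mul_def add_mset_commute)
qed

definition distinct_colours :: "mono \<Rightarrow> bool" where
  "distinct_colours M \<longleftrightarrow> (\<forall>c. count (image_mset fst M) c \<le> 1)"

lemma distinct_colours_add_mset:
  "distinct_colours (add_mset x M) \<longleftrightarrow> (\<forall>y\<in>#M. fst y \<noteq> fst x) \<and> distinct_colours M"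
  unfolding distinct_colours_def
  by (auto simp: count_eq_zero_iff le_Suc_eq)

lemma distinct_colours_mset: "distinct_colours (mset xs) \<longleftrightarrow> distinct (map fst xs)"
  by (induction xs) (force simp: distinct_colours_add_mset distinct_colours_def[of "{#}"])+

lemma zhu_eq_raise_mode:
  assumes "fock_mono l (add_mset x M)" "distinct_colours (add_mset x M)"
    "odd (size M)" "3 \<le> size M"
  shows "zhu_eq l (bvec (add_mset (raise x) M)) (smul (-1) (bvec (add_mset x M)))"
proof -
  have "M \<noteq> {#}" using assms(4) by auto
  then obtain y M' where M': "M = add_mset y M'" by (metis multiset_cases)
  then have "M' \<noteq> {#}" using assms(4) by auto
  then obtain z R where "M' = add_mset z R" by (metis multiset_cases)
  with M' have M: "M = add_mset y (add_mset z R)" by simp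
  have colours: "fst y \<noteq> fst x" "fst z \<noteq> fst x" "fst z \<noteq> fst y"
    "\<forall>w\<in>#R. fst w \<noteq> fst x \<and> fst w \<noteq> fst y \<and> fst w \<noteq> fst z"
    using assms(2) unfolding M distinct_colours_add_mset by auto
  define A where "A = bvec (add_mset (raise x) (add_mset y (add_mset z R)))"
  define B where "B = bvec (add_mset x (add_mset (raise y) (add_mset z R)))"
  define C where "C = bvec (add_mset x (add_mset y (add_mset (raise z) R)))"
  define Z where "Z = bvec (add_mset x (add_mset y (add_mset z R)))"
  define nx ny nz where "nx = (of_nat (snd x) :: complex)" "ny = (of_nat (snd y) :: complex)"
    "nz = (of_nat (snd z) :: complex)"
  have Rxy: "smul nx A + smul ny B + smul (nx + ny) Z \<in> Ospace l"
    using zcirc_pair_relation[of l x y "add_mset z R"] assms colours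
    unfolding A_def B_def Z_def nx_ny_nz_def M by (simp add: add_mset_commute)
  have Rxz: "smul nx A + smul nz C + smul (nx + nz) Z \<in> Ospace l"
    using zcirc_pair_relation[of l x z "add_mset y R"] assms colours
    unfolding A_def C_def Z_def nx_ny_nz_def M by (simp add: add_mset_commute)
  have Ryz: "smul ny B + smul nz C + smul (ny + nz) Z \<in> Ospace l"
    using zcirc_pair_relation[of l y z "add_mset x R"] assms colours
    unfolding B_def C_def Z_def nx_ny_nz_def M by (simp add: add_mset_commute)
  have "nx \<noteq> 0"
    using assms(1) unfolding nx_ny_nz_def fock_mono_def by auto
  then have "A - smul (-1) Z = smul (1 / (2 * nx))
      ((smul nx A + smul ny B + smul (nx + ny) Z) + (smul nx A + smul nz C + smul (nx + nz) Z)
        - (smul ny B + smul nz C + smul (ny + nz) Z))"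
    by (simp add: fun_eq_iff smul_def field_simps)
  also have "\<dots> \<in> Ospace l"
    by (rule Ospace.scale, rule Ospace_diff[OF Ospace.add[OF Rxy Rxz] Ryz])
  finally show ?thesis
    unfolding zhu_eq_def A_def Z_def M .
qed

lemma zhu_eq_lower_modes:
  assumes "fock_mono l T" "distinct_colours T" "even (size T)" "4 \<le> size T"
  shows "zhu_eq l (bvec T) (smul ((-1) ^ wt T) (bvec (image_mset (\<lambda>x. (fst x, 1)) T)))"
  using assms
proof (induction "wt T" arbitrary: T rule: less_induct)
  case less
  show ?case
  proof (cases "\<forall>x\<in>#T. snd x = 1")
    case True
    then have "image_mset (\<lambda>x. (fst x, 1)) T = T" "wt T = size T"
      by (induction T) (auto simp: prod_eq_iff)
    then show ?thesis
      using less.prems(3) by (simp add: zhu_eq_refl)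
  next
    case False
    then obtain x where x: "x \<in># T" "snd x \<noteq> 1" by auto
    then have "2 \<le> snd x" using less.prems(1) by (fastforce simp: fock_mono_def)
    define x' where "x' = (fst x, snd x - 1)"
    define M where "M = T - {#x#}"
    have T: "T = add_mset (raise x') M"
      using x \<open>2 \<le> snd x\<close> by (simp add: M_def x'_def raise_def)
    define T' where "T' = add_mset x' M"
    have T': "fock_mono l T'" "distinct_colours T'" "size T' = size T" "wt T = Suc (wt T')"
      using less.prems(1,2) \<open>2 \<le> snd x\<close>
      by (auto simp: T T'_def fock_mono_def distinct_colours_add_mset x'_def raise_def)
    have lower: "image_mset (\<lambda>x. (fst x, 1::nat)) T' = image_mset (\<lambda>x. (fst x, 1)) T"
      by (simp add: T T'_def x'_def raise_def)
    have "zhu_eq l (bvec T) (smul (-1) (bvec T'))"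
      using T' less.prems(3,4) unfolding T T'_def by (intro zhu_eq_raise_mode) auto
    moreover have "zhu_eq l (bvec T') (smul ((-1) ^ wt T') (bvec (image_mset (\<lambda>x. (fst x, 1)) T)))"
      using less.hyps[of T'] T' less.prems(3,4) lower by simp
    ultimately show ?thesis
      using T'(4) by (auto dest: zhu_eq_trans zhu_eq_smul[where c = "-1"])
  qed
qed

lemma foldr_hop_creation:
  "\<forall>i\<in>set xs. 1 \<le> m i \<Longrightarrow>
   foldr (\<lambda>i v. hop (a i) (- int (m i)) v) xs (bvec N) = bvec (N + mset (map (\<lambda>i. (a i, m i)) xs))"
  by (induction xs) (auto simp: hop_creation_bvec)

lemma hmono_eq_bvec:
  "\<forall>i<r. 1 \<le> m i \<Longrightarrow> hmono a m r = bvec (mset (map (\<lambda>i. (a i, m i)) [0..<r]))"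
  unfolding hmono_def vac_def by (subst foldr_hop_creation) auto

lemma Sab_eq_bvec: "Sab a b = bvec {#(a, 1), (b, 1)#}"
  using hop_creation_bvec[of 1] by (simp add: Sab_def vac_def add_mset_commute)

definition pair_entries :: "(nat \<times> nat) list \<Rightarrow> nat list" where
  "pair_entries P = concat (map (\<lambda>p. [fst p, snd p]) P)"

lemma pair_entries_simps[simp]:
  "pair_entries [] = []"
  "pair_entries (p # P) = fst p # snd p # pair_entries P"
  by (simp_all add: pair_entries_def)

lemma foldl_zstar_Sab:
  "distinct (pair_entries P) \<Longrightarrow> \<forall>w\<in>#M. fst w \<notin> set (pair_entries P) \<Longrightarrow> \<forall>w\<in>#M. 1 \<le> snd w \<Longrightarrow>
   foldl (\<lambda>acc p. zstar acc (Sab (fst p) (snd p))) (bvec M) P =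
     bvec (M + mset (map (\<lambda>c. (c, 1)) (pair_entries P)))"
proof (induction P arbitrary: M)
  case Nil
  then show ?case by simp
next
  case (Cons p P)
  have "zstar (bvec M) (Sab (fst p) (snd p)) = bvec (M + {#(fst p, 1), (snd p, 1)#})"
    unfolding Sab_eq_bvec using Cons.prems by (intro zstar_bvec_disjoint) auto
  moreover have "foldl (\<lambda>acc p. zstar acc (Sab (fst p) (snd p))) (bvec (M + {#(fst p, 1), (snd p, 1)#})) P
     = bvec (M + {#(fst p, 1), (snd p, 1)#} + mset (map (\<lambda>c. (c, 1)) (pair_entries P)))"
    using Cons.prems by (intro Cons.IH) auto
  ultimately show ?case by (simp add: add_mset_commute)
qed

lemma Salpha_eq_bvec:
  assumes "P \<noteq> []" "distinct (pair_entries P)"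
  shows "Salpha P = bvec (mset (map (\<lambda>c. (c, 1)) (pair_entries P)))"
proof (cases P)
  case (Cons p Q)
  then show ?thesis
    using foldl_zstar_Sab[of Q "{#(fst p, 1), (snd p, 1)#}"] assms(2)
    by (simp add: Salpha_def Sab_eq_bvec)
qed (use assms(1) in simp)

lemma Salpha_perfect_matching:
  assumes "P \<noteq> []" "inj_on a {..<2 * length P}"
    "(\<Union>p\<in>set P. {fst p, snd p}) = a ` {..<2 * length P}"
  shows "Salpha P = bvec (mset (map (\<lambda>i. (a i, 1)) [0..<2 * length P]))"
proof -
  have dist_a: "distinct (map a [0..<2 * length P])"
    using assms(2) by (simp add: distinct_map atLeast0LessThan)
  have set_eq: "set (pair_entries P) = set (map a [0..<2 * length P])"
    using assms(3) by (auto simp: pair_entries_def atLeast0LessThan)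
  have "length (pair_entries P) = 2 * length P"
    by (induction P) auto
  moreover have "card (set (pair_entries P)) = 2 * length P"
    using set_eq distinct_card[OF dist_a] by simp
  ultimately have dist: "distinct (pair_entries P)"
    by (simp add: card_distinct)
  then have "mset (pair_entries P) = mset (map a [0..<2 * length P])"
    using set_eq dist_a set_eq_iff_mset_eq_distinct by blast
  then show ?thesis
    using Salpha_eq_bvec[OF assms(1) dist] by (simp add: multiset.map_comp comp_def)
qed

theorem lemma4p1p10:
  fixes l k :: nat and a m :: "nat \<Rightarrow> nat" and P :: "(nat \<times> nat) list"
  assumes "2 \<le> k"
    and "\<forall>i<2*k. 1 \<le> a i \<and> a i \<le> l"
    and "inj_on a {..<2*k}"
    and "\<forall>i<2*k. 1 \<le> m i"
    and "length P = k"
    and "\<forall>p\<in>set P. fst p \<noteq> snd p"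
    and "(\<Union>p\<in>set P. {fst p, snd p}) = a ` {..<2*k}"
  shows "zhu_eq l (hmono a m (2*k)) (smul ((-1) ^ (\<Sum>i<2*k. m i)) (Salpha P))"
proof -
  define T where "T = mset (map (\<lambda>i. (a i, m i)) [0..<2*k])"
  have "hmono a m (2*k) = bvec T"
    unfolding T_def using assms(4) by (rule hmono_eq_bvec)
  moreover have "Salpha P = bvec (image_mset (\<lambda>x. (fst x, 1)) T)"
    using Salpha_perfect_matching[of P a] assms(1,3,5,7)
    by (force simp: T_def multiset.map_comp comp_def)
  moreover have "wt T = (\<Sum>i<2*k. m i)"
    by (simp add: T_def wt_def multiset.map_comp comp_def atLeast0LessThan sum_unfold_sum_mset)
  moreover have "fock_mono l T"
    using assms(2,4) by (auto simp: T_def fock_mono_def)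
  moreover have "distinct_colours T"
    unfolding T_def distinct_colours_mset
    using assms(3) by (simp add: comp_def distinct_map atLeast0LessThan)
  ultimately show ?thesis
    using zhu_eq_lower_modes[of l T] assms(1) by (simp add: T_def)
qed

end
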